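(* Let $q \ge 2$, $n \ge 1$ and $k \ge 0$ be integers, and let $\alpha_{i,j}$ be as defined in the context. Then $$\alpha_{k+2,k+1} = (k+1)(2q-1) - (q-1)n.$$
   Context: Let $g(y) = \dfrac{y(1-y)}{(1+(q-1)y)^2}$, a formal power series in $y$ with $g(0)=0$ and $g'(0) = 1 \ne 0$. For each integer $j \ge 0$, the formal power series $y^j (1+(q-1)y)^{-n}$ can be uniquely expanded as $\sum_{i \ge 0} \alpha_{i,j}\, g(y)^i$; this defines the real numbers $\alpha_{i,j}$. (Equivalently, these are the coefficients in $c_i = \sum_{j \le i} \alpha_{i,j} A_j$ relating the weight distribution $A_0,\dots,A_n$ of a pure state to the coefficients $c_i$ of its expansion $A(x,y)=\sum_{i=0}^{\lfloor n/2\rfloor} c_i (x+(q-1)y)^{n-2i}(y(x-y))^i$.) *)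

theory Defs
  imports "HOL-Computational_Algebra.Formal_Power_Series"
begin

definition g_fps :: "nat \<Rightarrow> real fps" where
  "g_fps q = fps_X * (1 - fps_X) * inverse ((1 + fps_const (real q - 1) * fps_X) ^ 2)"

definition F_fps :: "nat \<Rightarrow> nat \<Rightarrow> nat \<Rightarrow> real fps" where
  "F_fps q n j = fps_X ^ j * inverse ((1 + fps_const (real q - 1) * fps_X) ^ n)"

text \<open>alpha_{i,j}: the unique coefficients with F = sum_i alpha_{i,j} g^i.
  Since g^i has order i, the m-th coefficient of the formal sum sum_i a_i g^i
  is the finite sum over i \<le> m.\<close>
definition alpha :: "nat \<Rightarrow> nat \<Rightarrow> nat \<Rightarrow> nat \<Rightarrow> real" where
  "alpha q n i j = (THE a :: nat \<Rightarrow> real.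
     \<forall>m. fps_nth (F_fps q n j) m = (\<Sum>i'\<le>m. a i' * fps_nth (g_fps q ^ i') m)) i"

end

theory Submission
  imports Defs
begin

text \<open>Write g = y h with h(0) = 1, so that g^i = y^i + i h(1) y^(i+1) + ... and the powers
  of g form a unitriangular family: the coefficients of an expansion in them are obtained by
  forward substitution, one order at a time. Since F = y^j (1+(q-1)y)^(-n) vanishes below
  order j, this gives alpha_{i,j} = 0 for i < j, alpha_{j,j} = [y^j] F = 1 and
  alpha_{j+1,j} = [y^(j+1)] F - j h(1) = -n(q-1) + j(2q-1).
  The identity holds for all q and n.\<close>

unbundle fps_syntax

definition unitriangular :: "(nat \<Rightarrow> 'a::comm_ring_1 fps) \<Rightarrow> bool" where
  "unitriangular G \<longleftrightarrow> (\<forall>i. G i $ i = 1 \<and> (\<forall>m<i. G i $ m = 0))"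

definition triangular_expansion :: "(nat \<Rightarrow> 'a::comm_ring_1 fps) \<Rightarrow> (nat \<Rightarrow> 'a) \<Rightarrow> 'a fps \<Rightarrow> bool" where
  "triangular_expansion G a F \<longleftrightarrow> (\<forall>m. F $ m = (\<Sum>i\<le>m. a i * G i $ m))"

function triangular_coeffs :: "(nat \<Rightarrow> 'a::comm_ring_1 fps) \<Rightarrow> 'a fps \<Rightarrow> nat \<Rightarrow> 'a" where
  "triangular_coeffs G F m = F $ m - (\<Sum>i<m. triangular_coeffs G F i * G i $ m)"
  by auto
termination by (relation "measure (\<lambda>(G, F, m). m)") auto

declare triangular_coeffs.simps [simp del]

lemma triangular_expansion_iff_step:
  assumes "unitriangular G"
  shows "triangular_expansion G a F \<longleftrightarrow> (\<forall>m. a m = F $ m - (\<Sum>i<m. a i * G i $ m))"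
  using assms by (auto simp: triangular_expansion_def unitriangular_def
      lessThan_Suc_atMost [symmetric] algebra_simps)

lemma triangular_expansion_coeffs:
  assumes "unitriangular G"
  shows "triangular_expansion G (triangular_coeffs G F) F"
  unfolding triangular_expansion_iff_step [OF assms] using triangular_coeffs.simps by blast

lemma triangular_expansion_unique:
  assumes G: "unitriangular G" and a: "triangular_expansion G a F"
  shows "a = triangular_coeffs G F"
proof
  fix m show "a m = triangular_coeffs G F m"
  proof (induction m rule: less_induct)
    case (less m)
    have "a m = F $ m - (\<Sum>i<m. a i * G i $ m)"
      using a unfolding triangular_expansion_iff_step [OF G] by blast
    also have "(\<Sum>i<m. a i * G i $ m) = (\<Sum>i<m. triangular_coeffs G F i * G i $ m)"
      using less by (intro sum.cong) auto
    finally show ?case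
      by (subst triangular_coeffs.simps) simp
  qed
qed

lemma triangular_coeffs_below_order:
  assumes "unitriangular G" and "\<And>m. m < j \<Longrightarrow> F $ m = 0" and "i < j"
  shows "triangular_coeffs G F i = 0"
  using assms(3)
proof (induction i rule: less_induct)
  case (less i)
  then have "(\<Sum>i'<i. triangular_coeffs G F i' * G i' $ i) = 0"
    by (intro sum.neutral) auto
  with assms(2) [OF less.prems] show ?case
    by (subst triangular_coeffs.simps) simp
qed

lemma triangular_coeffs_at_order:
  assumes G: "unitriangular G" and F: "\<And>m. m < j \<Longrightarrow> F $ m = 0"
  shows "triangular_coeffs G F j = F $ j"
    and "triangular_coeffs G F (Suc j) = F $ Suc j - F $ j * G j $ Suc j"
proof -
  have below: "(\<Sum>i<j. triangular_coeffs G F i * G i $ m) = 0" for m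
    using triangular_coeffs_below_order [OF G F] by (intro sum.neutral) auto
  show at: "triangular_coeffs G F j = F $ j"
    using below [of j] by (subst triangular_coeffs.simps) simp
  have "(\<Sum>i<Suc j. triangular_coeffs G F i * G i $ Suc j) = F $ j * G j $ Suc j"
    using below [of "Suc j"] at by simp
  then show "triangular_coeffs G F (Suc j) = F $ Suc j - F $ j * G j $ Suc j"
    by (subst triangular_coeffs.simps) simp
qed

lemma fps_X_mult_power_nth:
  fixes h :: "'a::comm_ring_1 fps"
  shows "(fps_X * h) ^ i $ m = (if m < i then 0 else h ^ i $ (m - i))"
  unfolding power_mult_distrib by (rule fps_X_power_mult_nth)

lemma unitriangular_fps_X_mult_powers:
  fixes h :: "'a::comm_ring_1 fps"
  assumes "h $ 0 = 1"
  shows "unitriangular (\<lambda>i. (fps_X * h) ^ i)"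
  using assms by (simp add: unitriangular_def fps_X_mult_power_nth fps_power_zeroth_eq_one)

lemma fps_X_mult_power_nth_Suc:
  fixes h :: "'a::comm_ring_1 fps"
  assumes "h $ 0 = 1"
  shows "(fps_X * h) ^ i $ Suc i = of_nat i * h $ 1"
  using fps_power_first_eq [OF assms, of i] by (simp add: fps_X_mult_power_nth)

lemma fps_inverse_nth_1:
  fixes u :: "'a::field fps"
  assumes "u $ 0 = 1"
  shows "inverse u $ 1 = - u $ 1"
proof -
  have "(inverse u * u) $ 1 = 0"
    using inverse_mult_eq_1 [of u] assms by simp
  with assms show ?thesis by (simp add: fps_mult_nth_1 eq_neg_iff_add_eq_0 add.commute)
qed

lemma fps_inverse_linear_power_nth:
  fixes c :: "'a::field"
  shows "inverse ((1 + fps_const c * fps_X) ^ n) $ 0 = 1"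
    and "inverse ((1 + fps_const c * fps_X) ^ n) $ 1 = - of_nat n * c"
proof -
  have pow0: "(1 + fps_const c * fps_X) ^ n $ 0 = 1"
    by (simp add: fps_power_zeroth_eq_one)
  then show "inverse ((1 + fps_const c * fps_X) ^ n) $ 0 = 1"
    by simp
  have "(1 + fps_const c * fps_X) ^ n $ 1 = of_nat n * c"
    using fps_power_first_eq [of "1 + fps_const c * fps_X" n] by simp
  with fps_inverse_nth_1 [OF pow0] show "inverse ((1 + fps_const c * fps_X) ^ n) $ 1 = - of_nat n * c"
    by simp
qed

definition g_cofactor :: "nat \<Rightarrow> real fps" where
  "g_cofactor q = (1 - fps_X) * inverse ((1 + fps_const (real q - 1) * fps_X) ^ 2)"

lemma g_fps_eq: "g_fps q = fps_X * g_cofactor q"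
  by (simp add: g_fps_def g_cofactor_def mult.assoc)

lemma g_cofactor_nth_0: "g_cofactor q $ 0 = 1"
  using fps_inverse_linear_power_nth(1) by (simp add: g_cofactor_def)

lemma g_cofactor_nth_1: "g_cofactor q $ 1 = 1 - 2 * real q"
  using fps_inverse_linear_power_nth [of "real q - 1" 2]
  by (simp add: g_cofactor_def fps_mult_nth_1 algebra_simps)

lemma unitriangular_g_fps_powers: "unitriangular (\<lambda>i. g_fps q ^ i)"
  by (simp add: g_fps_eq unitriangular_fps_X_mult_powers g_cofactor_nth_0)

lemma g_fps_power_nth_Suc: "g_fps q ^ i $ Suc i = real i * (1 - 2 * real q)"
  using fps_X_mult_power_nth_Suc [OF g_cofactor_nth_0, of q i] g_cofactor_nth_1 [of q]
  by (simp add: g_fps_eq)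

lemma F_fps_nth: "F_fps q n j $ m =
    (if m < j then 0 else inverse ((1 + fps_const (real q - 1) * fps_X) ^ n) $ (m - j))"
  by (simp add: F_fps_def fps_X_power_mult_nth)

lemma F_fps_nth_order: "F_fps q n j $ j = 1"
  using fps_inverse_linear_power_nth(1) by (simp add: F_fps_nth)

lemma F_fps_nth_Suc_order: "F_fps q n j $ Suc j = - real n * (real q - 1)"
  using fps_inverse_linear_power_nth(2) by (simp add: F_fps_nth)

lemma alpha_eq_triangular_coeffs:
  "alpha q n i j = triangular_coeffs (\<lambda>i. g_fps q ^ i) (F_fps q n j) i"
proof -
  note G = unitriangular_g_fps_powers [of q]
  have "(THE a. triangular_expansion (\<lambda>i. g_fps q ^ i) a (F_fps q n j))
      = triangular_coeffs (\<lambda>i. g_fps q ^ i) (F_fps q n j)"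
    using triangular_expansion_coeffs [OF G] triangular_expansion_unique [OF G]
    by (rule the_equality)
  then show ?thesis
    by (simp add: alpha_def triangular_expansion_def)
qed

theorem lemma2:
  fixes q n k :: nat
  assumes "q \<ge> 2" and "n \<ge> 1"
  shows "alpha q n (k + 2) (k + 1) = real (k + 1) * (2 * real q - 1) - (real q - 1) * real n"
proof -
  have "alpha q n (Suc (k + 1)) (k + 1)
      = F_fps q n (k + 1) $ Suc (k + 1) - F_fps q n (k + 1) $ (k + 1) * g_fps q ^ (k + 1) $ Suc (k + 1)"
    using triangular_coeffs_at_order(2) [OF unitriangular_g_fps_powers, of "k + 1" "F_fps q n (k + 1)"]
    by (simp add: alpha_eq_triangular_coeffs F_fps_nth)
  also have "\<dots> = - real n * (real q - 1) - real (k + 1) * (1 - 2 * real q)"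
    by (simp only: F_fps_nth_order F_fps_nth_Suc_order g_fps_power_nth_Suc mult_1_left)
  finally show ?thesis by (simp add: algebra_simps)
qed

end
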